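(* Let $D$ be a pv-monoid (idempotent, with symmetric valuation function), $P$ a nonempty finite set of ports, and let $\zeta=\bigoplus_{i\in I}\left(d_i\otimes\sum_{j\in J_i}m_{i,j}\right)\in PCL(D,P)$ be a formula in full normal form, where $I=\{1,\dots,n\}$. Then (i) $*\zeta\equiv\bigoplus_{\emptyset\neq I'\subseteq I}\left(\mathrm{val}(d_i)_{i\in I'}\otimes\left(\biguplus_{i\in I'}\sum_{j\in J_i}m_{i,j}\right)\right)$; (ii) $( *\zeta)\otimes\left(\biguplus_{i\in I}\sum_{j\in J_i}m_{i,j}\right)\equiv\mathrm{val}(d_1,\dots,d_n)\otimes\left(\biguplus_{i\in I}\sum_{j\in J_i}m_{i,j}\right)$. Here $\mathrm{val}(d_i)_{i\in I'}$ denotes $\mathrm{val}$ applied to the values $d_i$, $i\in I'$, in any order, and $\biguplus$ denotes iterated $\uplus$ (in any fixed bracketing).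
   Context: A valuation monoid $(D,\oplus,\mathrm{val},0)$ consists of a commutative monoid $(D,\oplus,0)$ and a map $\mathrm{val}:D^+\to D$ ($D^+$ = nonempty finite sequences over $D$) with $\mathrm{val}(d)=d$ and $\mathrm{val}(d_1,\dots,d_n)=0$ whenever some $d_i=0$. A pv-monoid $(D,\oplus,\mathrm{val},\otimes,0,1)$ is a valuation monoid with a binary operation $\otimes$ and an element $1$ such that $\mathrm{val}(1,\dots,1)=1$ for any $n\ge1$ arguments, $0\otimes d=d\otimes0=0$, $1\otimes d=d\otimes1=d$. Standing assumption: $D$ is idempotent ($d\oplus d=d$) and $\mathrm{val}$ is symmetric (invariant under permutation of arguments). $I(P)$ is the set of nonempty subsets of $P$, $C(P)$ the set of nonempty subsets of $I(P)$. PIL formulas: $\phi::=true\mid p\mid\overline{\phi}\mid\phi\vee\phi$ ($p\in P$), $\alpha\models_i p$ iff $p\in\alpha$, negation and disjunction as usual, $\wedge$ via De Morgan. A full monomial is a PIL formula $\bigwedge_{p\in P_+}p\wedge\bigwedge_{p\in P_-}\overline p$ with $P_+\cup P_-=P$, $P_+\cap P_-=\emptyset$. PCL formulas: $f::=true\mid\phi\mid\neg f\mid f\sqcup f\mid f+f$; $\gamma\models\phi$ iff every $\alpha\in\gamma$ satisfies $\phi$; $\neg,\sqcup$ are complement and union; $\gamma\models f_1+f_2$ iff $\gamma=\gamma_1\cup\gamma_2$ with $\gamma_1,\gamma_2\in C(P)$, $\gamma_1\models f_1,\gamma_2\models f_2$. $\sum$ denotes $+$-combination. w$_{\text{pvm}}$PCL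 formulas ($PCL(D,P)$): $\zeta::=d\mid f\mid\zeta\oplus\zeta\mid\zeta\otimes\zeta\mid\zeta\uplus\zeta\mid *\zeta$; semantics $\|\zeta\|:C(P)\to D$: $\|d\|(\gamma)=d$; $\|f\|(\gamma)\in\{0,1\}$ is $1$ iff $\gamma\models f$; $\oplus,\otimes$ pointwise; $\|\zeta_1\uplus\zeta_2\|(\gamma)=\bigoplus(\|\zeta_1\|(\gamma_1)\otimes\|\zeta_2\|(\gamma_2))$ over disjoint $\gamma_1,\gamma_2\in C(P)$ with union $\gamma$; $\|*\zeta\|(\gamma)=\bigoplus_{n>0}\bigoplus\mathrm{val}(\|\zeta\|(\gamma_1),\dots,\|\zeta\|(\gamma_n))$ over pairwise disjoint $\gamma_1,\dots,\gamma_n\in C(P)$ with union $\gamma$. $\equiv$ means equality of semantics on all of $C(P)$. A formula $\bigoplus_{i\in I}\left(d_i\otimes\sum_{j\in J_i}m_{i,j}\right)$ (finite nonempty index sets, $d_i\in D$, full monomials $m_{i,j}$) is in full normal form; full normal forms are required to satisfy: (i) $j\ne j'$ implies $m_{i,j}\not\equiv m_{i,j'}$; (ii) $i\ne i'$ implies $\sum_{j\in J_i}m_{i,j}\not\equiv\sum_{j\in J_{i'}}m_{i',j}$. *)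

theory Defs
  imports Main "HOL-Library.Multiset"
begin

text \<open>A pv-monoid is given by (pl, vl, tm, z, e): the commutative monoid (D, pl, z),
  the valuation function vl (only its values on nonempty lists matter), the binary
  operation tm and the unit element e.\<close>

definition pv_monoid ::
  "('d \<Rightarrow> 'd \<Rightarrow> 'd) \<Rightarrow> ('d list \<Rightarrow> 'd) \<Rightarrow> ('d \<Rightarrow> 'd \<Rightarrow> 'd) \<Rightarrow> 'd \<Rightarrow> 'd \<Rightarrow> bool" where
  "pv_monoid pl vl tm z e \<longleftrightarrow>
     comm_monoid pl z
   \<and> (\<forall>d. vl [d] = d)
   \<and> (\<forall>ds. ds \<noteq> [] \<and> z \<in> set ds \<longrightarrow> vl ds = z)
   \<and> (\<forall>n\<ge>1. vl (replicate n e) = e)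
   \<and> (\<forall>d. tm z d = z \<and> tm d z = z)
   \<and> (\<forall>d. tm e d = d \<and> tm d e = d)"

definition idempotent_pv :: "('d \<Rightarrow> 'd \<Rightarrow> 'd) \<Rightarrow> bool" where
  "idempotent_pv pl \<longleftrightarrow> (\<forall>d. pl d d = d)"

definition symmetric_val :: "('d list \<Rightarrow> 'd) \<Rightarrow> bool" where
  "symmetric_val vl \<longleftrightarrow> (\<forall>xs ys. xs \<noteq> [] \<and> mset xs = mset ys \<longrightarrow> vl xs = vl ys)"

definition bigplus :: "('d \<Rightarrow> 'd \<Rightarrow> 'd) \<Rightarrow> 'd \<Rightarrow> ('a \<Rightarrow> 'd) \<Rightarrow> 'a set \<Rightarrow> 'd" where
  "bigplus pl z g A = comm_monoid_set.F pl z g A"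

definition IP :: "'p set \<Rightarrow> 'p set set" where
  "IP P = {\<alpha>. \<alpha> \<noteq> {} \<and> \<alpha> \<subseteq> P}"

definition CP :: "'p set \<Rightarrow> 'p set set set" where
  "CP P = {\<gamma>. \<gamma> \<noteq> {} \<and> \<gamma> \<subseteq> IP P}"

datatype 'p pil = PTrue | PAtom 'p | PNot "'p pil" | POr "'p pil" "'p pil"

fun pil_sat :: "'p set \<Rightarrow> 'p pil \<Rightarrow> bool" where
  "pil_sat \<alpha> PTrue = True"
| "pil_sat \<alpha> (PAtom p) = (p \<in> \<alpha>)"
| "pil_sat \<alpha> (PNot \<phi>) = (\<not> pil_sat \<alpha> \<phi>)"
| "pil_sat \<alpha> (POr \<phi> \<psi>) = (pil_sat \<alpha> \<phi> \<or> pil_sat \<alpha> \<psi>)"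

definition PAnd :: "'p pil \<Rightarrow> 'p pil \<Rightarrow> 'p pil" where
  "PAnd \<phi> \<psi> = PNot (POr (PNot \<phi>) (PNot \<psi>))"

definition lit :: "'p set \<Rightarrow> 'p \<Rightarrow> 'p pil" where
  "lit Pp p = (if p \<in> Pp then PAtom p else PNot (PAtom p))"

definition conj_list :: "'p pil list \<Rightarrow> 'p pil" where
  "conj_list xs = foldl PAnd (hd xs) (tl xs)"

definition is_full_monomial :: "'p set \<Rightarrow> 'p pil \<Rightarrow> bool" where
  "is_full_monomial P m \<longleftrightarrow>
     (\<exists>Pp xs. Pp \<subseteq> P \<and> distinct xs \<and> set xs = P \<and> m = conj_list (map (lit Pp) xs))"

datatype 'p pcl = CTrue | CPil "'p pil" | CNot "'p pcl" | CSqcup "'p pcl" "'p pcl"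
  | CPlus "'p pcl" "'p pcl"

fun pcl_sat :: "'p set \<Rightarrow> 'p set set \<Rightarrow> 'p pcl \<Rightarrow> bool" where
  "pcl_sat P \<gamma> CTrue = True"
| "pcl_sat P \<gamma> (CPil \<phi>) = (\<forall>\<alpha>\<in>\<gamma>. pil_sat \<alpha> \<phi>)"
| "pcl_sat P \<gamma> (CNot f) = (\<not> pcl_sat P \<gamma> f)"
| "pcl_sat P \<gamma> (CSqcup f g) = (pcl_sat P \<gamma> f \<or> pcl_sat P \<gamma> g)"
| "pcl_sat P \<gamma> (CPlus f g) =
     (\<exists>\<gamma>1\<in>CP P. \<exists>\<gamma>2\<in>CP P. \<gamma> = \<gamma>1 \<union> \<gamma>2 \<and> pcl_sat P \<gamma>1 f \<and> pcl_sat P \<gamma>2 g)"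

definition pcl_equiv :: "'p set \<Rightarrow> 'p pcl \<Rightarrow> 'p pcl \<Rightarrow> bool" where
  "pcl_equiv P f g \<longleftrightarrow> (\<forall>\<gamma>\<in>CP P. pcl_sat P \<gamma> f = pcl_sat P \<gamma> g)"

definition plus_list :: "'p pcl list \<Rightarrow> 'p pcl" where
  "plus_list xs = foldl CPlus (hd xs) (tl xs)"

datatype ('d, 'p) wpcl = WConst 'd | WPcl "'p pcl" | WOplus "('d,'p) wpcl" "('d,'p) wpcl"
  | WOtimes "('d,'p) wpcl" "('d,'p) wpcl" | WUplus "('d,'p) wpcl" "('d,'p) wpcl"
  | WStar "('d,'p) wpcl"

definition disj_seqs :: "'p set \<Rightarrow> 'p set set \<Rightarrow> 'p set set list set" where
  "disj_seqs P \<gamma> = {gs. gs \<noteq> [] \<and> set gs \<subseteq> CP P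
      \<and> (\<forall>i<length gs. \<forall>j<length gs. i \<noteq> j \<longrightarrow> gs ! i \<inter> gs ! j = {})
      \<and> \<Union> (set gs) = \<gamma>}"

fun wsem :: "('d \<Rightarrow> 'd \<Rightarrow> 'd) \<Rightarrow> ('d list \<Rightarrow> 'd) \<Rightarrow> ('d \<Rightarrow> 'd \<Rightarrow> 'd) \<Rightarrow> 'd \<Rightarrow> 'd \<Rightarrow>
    'p set \<Rightarrow> ('d,'p) wpcl \<Rightarrow> 'p set set \<Rightarrow> 'd" where
  "wsem pl vl tm z e P (WConst d) \<gamma> = d"
| "wsem pl vl tm z e P (WPcl f) \<gamma> = (if pcl_sat P \<gamma> f then e else z)"
| "wsem pl vl tm z e P (WOplus a b) \<gamma> = pl (wsem pl vl tm z e P a \<gamma>) (wsem pl vl tm z e P b \<gamma>)"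
| "wsem pl vl tm z e P (WOtimes a b) \<gamma> = tm (wsem pl vl tm z e P a \<gamma>) (wsem pl vl tm z e P b \<gamma>)"
| "wsem pl vl tm z e P (WUplus a b) \<gamma> =
     bigplus pl z (\<lambda>(\<gamma>1, \<gamma>2). tm (wsem pl vl tm z e P a \<gamma>1) (wsem pl vl tm z e P b \<gamma>2))
       {(\<gamma>1, \<gamma>2). \<gamma>1 \<in> CP P \<and> \<gamma>2 \<in> CP P \<and> \<gamma>1 \<inter> \<gamma>2 = {} \<and> \<gamma>1 \<union> \<gamma>2 = \<gamma>}"
| "wsem pl vl tm z e P (WStar a) \<gamma> =
     bigplus pl z (\<lambda>gs. vl (map (wsem pl vl tm z e P a) gs)) (disj_seqs P \<gamma>)"

definition wequiv :: "('d \<Rightarrow> 'd \<Rightarrow> 'd) \<Rightarrow> ('d list \<Rightarrow> 'd) \<Rightarrow> ('d \<Rightarrow> 'd \<Rightarrow> 'd) \<Rightarrow> 'd \<Rightarrow> 'd \<Rightarrow>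
    'p set \<Rightarrow> ('d,'p) wpcl \<Rightarrow> ('d,'p) wpcl \<Rightarrow> bool" where
  "wequiv pl vl tm z e P a b \<longleftrightarrow> (\<forall>\<gamma>\<in>CP P. wsem pl vl tm z e P a \<gamma> = wsem pl vl tm z e P b \<gamma>)"

definition oplus_list :: "('d,'p) wpcl list \<Rightarrow> ('d,'p) wpcl" where
  "oplus_list xs = foldl WOplus (hd xs) (tl xs)"

definition uplus_list :: "('d,'p) wpcl list \<Rightarrow> ('d,'p) wpcl" where
  "uplus_list xs = foldl WUplus (hd xs) (tl xs)"

definition mono_sum :: "nat set \<Rightarrow> (nat \<Rightarrow> 'p pil) \<Rightarrow> 'p pcl" where
  "mono_sum J m = plus_list (map (\<lambda>j. CPil (m j)) (sorted_list_of_set J))"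

definition fnf_formula :: "nat \<Rightarrow> (nat \<Rightarrow> 'd) \<Rightarrow> (nat \<Rightarrow> nat set) \<Rightarrow> (nat \<Rightarrow> nat \<Rightarrow> 'p pil)
    \<Rightarrow> ('d,'p) wpcl" where
  "fnf_formula n d J m =
     oplus_list (map (\<lambda>i. WOtimes (WConst (d i)) (WPcl (mono_sum (J i) (m i)))) [1..<Suc n])"

definition full_normal_form :: "'p set \<Rightarrow> nat \<Rightarrow> (nat \<Rightarrow> nat set) \<Rightarrow> (nat \<Rightarrow> nat \<Rightarrow> 'p pil) \<Rightarrow> bool" where
  "full_normal_form P n J m \<longleftrightarrow>
     n \<ge> 1
   \<and> (\<forall>i\<in>{1..n}. finite (J i) \<and> J i \<noteq> {} \<and> (\<forall>j\<in>J i. is_full_monomial P (m i j)))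
   \<and> (\<forall>i\<in>{1..n}. \<forall>j\<in>J i. \<forall>j'\<in>J i. j \<noteq> j' \<longrightarrow> \<not> pcl_equiv P (CPil (m i j)) (CPil (m i j')))
   \<and> (\<forall>i\<in>{1..n}. \<forall>i'\<in>{1..n}. i \<noteq> i' \<longrightarrow>
        \<not> pcl_equiv P (mono_sum (J i) (m i)) (mono_sum (J i') (m i')))"

end

(*
  A summand \<Sum>j\<in>J i. m i j of a full normal form is a +-combination of full monomials,
  so it has at most one model \<gamma>_i in C(P); condition (ii) makes i \<mapsto> \<gamma>_i injective.
  Hence \<zeta> evaluates to d i on \<gamma>_i and to 0 on configurations that are no \<gamma>_i.
  A term val(\<zeta>(\<gamma>1), ..., \<zeta>(\<gamma>k)) of *\<zeta> at \<gamma> is therefore nonzero only if the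
  \<gamma>j are the models \<gamma>_i, i \<in> I', of a set I' of summands whose models partition \<gamma>,
  and then, val being symmetric, it equals val(d i)_{i \<in> I'}. The right-hand side of (i)
  has exactly these nonzero terms, and since \<oplus> is idempotent a finite sum is determined
  by its set of nonzero terms. For (ii): if the models of all n summands partition \<gamma>,
  no proper subset of them covers \<gamma>, so only I' = {1..n} contributes.
*)
theory Submission
  imports Defs
begin

locale idempotent_comm_monoid_set = comm_monoid_set + semilattice_neutr
begin

lemma insert_idem: "finite A \<Longrightarrow> F g (insert x A) = g x \<^bold>* F g A"
  by (metis insert_if insert_remove left_idem)

lemma image_idem: "finite A \<Longrightarrow> F h (g ` A) = F (h \<circ> g) A"
  by (induction A rule: finite_induct) (simp_all add: insert_idem)

lemma if_const: "finite A \<Longrightarrow> F (\<lambda>x. if Q x then c else \<^bold>1) A = (if \<exists>x\<in>A. Q x then c else \<^bold>1)"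
  by (induction A rule: finite_induct) (simp_all add: insert_idem)

lemma eq_F_id_nonzero_values: "finite A \<Longrightarrow> F g A = F id (g ` A - {\<^bold>1})"
  using image_idem[of A id g] mono_neutral_left[of "g ` A" "g ` A - {\<^bold>1}" id] by auto

lemma cong_nonzero_values:
  "finite A \<Longrightarrow> finite B \<Longrightarrow> g ` A - {\<^bold>1} = h ` B - {\<^bold>1} \<Longrightarrow> F g A = F h B"
  by (metis eq_F_id_nonzero_values)

end

lemma list_all2_snoc2:
  "list_all2 R xs (ys @ [y]) \<longleftrightarrow> (\<exists>xs' x. xs = xs' @ [x] \<and> list_all2 R xs' ys \<and> R x y)"
proof
  assume "list_all2 R xs (ys @ [y])"
  then show "\<exists>xs' x. xs = xs' @ [x] \<and> list_all2 R xs' ys \<and> R x y"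
    by (cases xs rule: rev_cases) (auto simp: list_all2_append2 list_all2_Cons2)
qed (auto intro: list_all2_appendI)

lemma pil_sat_foldl_PAnd:
  "pil_sat \<alpha> (foldl PAnd \<phi> \<psi>s) \<longleftrightarrow> pil_sat \<alpha> \<phi> \<and> (\<forall>\<psi>\<in>set \<psi>s. pil_sat \<alpha> \<psi>)"
  by (induction \<psi>s arbitrary: \<phi>) (auto simp: PAnd_def)

lemma pil_sat_conj_list:
  "\<phi>s \<noteq> [] \<Longrightarrow> pil_sat \<alpha> (conj_list \<phi>s) \<longleftrightarrow> (\<forall>\<phi>\<in>set \<phi>s. pil_sat \<alpha> \<phi>)"
  unfolding conj_list_def by (cases \<phi>s) (auto simp: pil_sat_foldl_PAnd)

definition at_most_one_model :: "'p set \<Rightarrow> 'p pcl \<Rightarrow> bool" where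
  "at_most_one_model P f \<longleftrightarrow>
     (\<forall>\<gamma>\<in>CP P. \<forall>\<gamma>'\<in>CP P. pcl_sat P \<gamma> f \<longrightarrow> pcl_sat P \<gamma>' f \<longrightarrow> \<gamma> = \<gamma>')"

lemma CP_empty: "CP {} = {}"
  unfolding CP_def IP_def by auto

lemma full_monomial_at_most_one_model:
  assumes "is_full_monomial P \<phi>"
  shows "at_most_one_model P (CPil \<phi>)"
proof (cases "P = {}")
  case False
  obtain Pp xs where Pp: "Pp \<subseteq> P" "set xs = P" "\<phi> = conj_list (map (lit Pp) xs)"
    using assms unfolding is_full_monomial_def by blast
  have "\<alpha> = Pp" if "\<alpha> \<in> IP P" "pil_sat \<alpha> \<phi>" for \<alpha>
  proof -
    have "map (lit Pp) xs \<noteq> []"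
      using Pp False by auto
    then have "\<forall>p\<in>P. pil_sat \<alpha> (lit Pp p)"
      using that Pp by (simp add: pil_sat_conj_list)
    then show ?thesis
      using that Pp unfolding IP_def lit_def by (auto split: if_splits)
  qed
  then have "\<gamma> = {Pp}" if "\<gamma> \<in> CP P" "pcl_sat P \<gamma> (CPil \<phi>)" for \<gamma>
    using that unfolding CP_def by auto
  then show ?thesis
    unfolding at_most_one_model_def by blast
qed (simp add: at_most_one_model_def CP_empty)

lemma at_most_one_model_CPlus:
  "at_most_one_model P f \<Longrightarrow> at_most_one_model P g \<Longrightarrow> at_most_one_model P (CPlus f g)"
  unfolding at_most_one_model_def by auto

lemma at_most_one_model_foldl_CPlus:
  "at_most_one_model P f \<Longrightarrow> \<forall>g\<in>set gs. at_most_one_model P g \<Longrightarrow>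
   at_most_one_model P (foldl CPlus f gs)"
  by (induction gs arbitrary: f) (simp_all add: at_most_one_model_CPlus)

lemma at_most_one_model_mono_sum:
  assumes "finite J" "J \<noteq> {}" "\<forall>j\<in>J. is_full_monomial P (\<phi> j)"
  shows "at_most_one_model P (mono_sum J \<phi>)"
proof -
  obtain j js where "sorted_list_of_set J = j # js"
    using assms(1,2) by (cases "sorted_list_of_set J") auto
  moreover have "set (sorted_list_of_set J) = J"
    using assms(1) by simp
  ultimately show ?thesis
    using assms(3) unfolding mono_sum_def plus_list_def
    by (auto intro!: at_most_one_model_foldl_CPlus full_monomial_at_most_one_model)
qed

lemma full_normal_form_summands:
  assumes "full_normal_form P n J m" "i \<in> {1..n}"
  shows "finite (J i)" "J i \<noteq> {}" "\<forall>j\<in>J i. is_full_monomial P (m i j)"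
  using assms(1)[unfolded full_normal_form_def, THEN conjunct2, THEN conjunct1, rule_format,
      OF assms(2)]
  by blast+

lemma full_normal_form_distinct_summands:
  assumes "full_normal_form P n J m" "i \<in> {1..n}" "i' \<in> {1..n}" "i \<noteq> i'"
  shows "\<not> pcl_equiv P (mono_sum (J i) (m i)) (mono_sum (J i') (m i'))"
  using assms(1)[unfolded full_normal_form_def, THEN conjunct2, THEN conjunct2, THEN conjunct2,
      rule_format, OF assms(2-4)] .

lemma disj_seqs_iff:
  "gs \<in> disj_seqs P \<gamma> \<longleftrightarrow>
     gs \<noteq> [] \<and> set gs \<subseteq> CP P \<and> distinct gs \<and> pairwise disjnt (set gs) \<and> \<Union> (set gs) = \<gamma>"
proof -
  have "(\<forall>i<length gs. \<forall>j<length gs. i \<noteq> j \<longrightarrow> gs ! i \<inter> gs ! j = {}) \<longleftrightarrow>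
        distinct gs \<and> pairwise disjnt (set gs)" if "set gs \<subseteq> CP P"
  proof
    assume disjoint: "\<forall>i<length gs. \<forall>j<length gs. i \<noteq> j \<longrightarrow> gs ! i \<inter> gs ! j = {}"
    moreover have "gs ! i \<noteq> {}" if "i < length gs" for i
      using \<open>set gs \<subseteq> CP P\<close> that nth_mem unfolding CP_def by blast
    ultimately have "distinct gs"
      unfolding distinct_conv_nth by (metis inf.idem)
    moreover have "pairwise disjnt (set gs)"
      using disjoint unfolding pairwise_def disjnt_def by (metis in_set_conv_nth)
    ultimately show "distinct gs \<and> pairwise disjnt (set gs)" ..
  next
    assume "distinct gs \<and> pairwise disjnt (set gs)"
    then show "\<forall>i<length gs. \<forall>j<length gs. i \<noteq> j \<longrightarrow> gs ! i \<inter> gs ! j = {}"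
      by (auto simp: nth_eq_iff_index_eq pairwise_def disjnt_def)
  qed
  then show ?thesis
    unfolding disj_seqs_def by blast
qed

lemma finite_CP: "finite P \<Longrightarrow> finite (CP P)"
  unfolding CP_def IP_def by (rule finite_subset[of _ "Pow (Pow P)"]) auto

lemma finite_disj_seqs:
  assumes "finite P"
  shows "finite (disj_seqs P \<gamma>)"
proof -
  have "disj_seqs P \<gamma> \<subseteq> {gs. set gs \<subseteq> CP P \<and> length gs \<le> card (CP P)}"
  proof (intro subsetI CollectI)
    fix gs assume "gs \<in> disj_seqs P \<gamma>"
    then have "distinct gs" "set gs \<subseteq> CP P"
      unfolding disj_seqs_iff by auto
    then show "set gs \<subseteq> CP P \<and> length gs \<le> card (CP P)"
      using card_mono[OF finite_CP[OF assms]] by (simp flip: distinct_card)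
  qed
  then show ?thesis
    using finite_lists_length_le[OF finite_CP[OF assms]] by (rule finite_subset)
qed

lemma disj_seqs_CP: "gs \<in> disj_seqs P \<gamma> \<Longrightarrow> \<gamma> \<in> CP P"
  unfolding disj_seqs_iff CP_def by (cases gs) auto

lemma disj_seqs_snoc:
  assumes "gs \<noteq> []"
  shows "gs @ [g] \<in> disj_seqs P \<gamma> \<longleftrightarrow>
         (\<exists>\<gamma>1. gs \<in> disj_seqs P \<gamma>1 \<and> g \<in> CP P \<and> \<gamma>1 \<inter> g = {} \<and> \<gamma>1 \<union> g = \<gamma>)"
proof -
  have "g \<noteq> {}" if "g \<in> CP P"
    using that unfolding CP_def by auto
  then show ?thesis
    using assms unfolding disj_seqs_iff
    by (auto simp: pairwise_insert disjnt_def)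
qed

lemma set_upt_Suc: "set [m..<Suc n] = {m..n}"
  by (simp only: set_upt atLeastLessThanSuc_atLeastAtMost)

lemma set_image_nonempty_subseqs:
  "set ` set (filter (\<lambda>ys. ys \<noteq> []) (subseqs xs)) = Pow (set xs) - {{}}"
  unfolding subseqs_powset[symmetric] by force

locale idempotent_pv_monoid =
  fixes pl :: "'d \<Rightarrow> 'd \<Rightarrow> 'd" and vl :: "'d list \<Rightarrow> 'd" and tm :: "'d \<Rightarrow> 'd \<Rightarrow> 'd"
    and z e :: 'd
  assumes pv_monoid: "pv_monoid pl vl tm z e"
    and idempotent: "idempotent_pv pl"
begin

sublocale idempotent_comm_monoid_set pl z
  using pv_monoid idempotent
  unfolding pv_monoid_def idempotent_pv_def comm_monoid_def abel_semigroup_def semigroup_def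
  by unfold_locales (auto simp: abel_semigroup_axioms_def comm_monoid_axioms_def)

lemma tm_zero_left [simp]: "tm z x = z"
  and tm_zero_right [simp]: "tm x z = z"
  and tm_one_left [simp]: "tm e x = x"
  and tm_one_right [simp]: "tm x e = x"
  using pv_monoid unfolding pv_monoid_def by auto

lemma vl_zero: "z \<in> set ds \<Longrightarrow> vl ds = z"
  using pv_monoid unfolding pv_monoid_def by (metis empty_iff list.set(1))

abbreviation sem :: "'p set \<Rightarrow> ('d, 'p) wpcl \<Rightarrow> 'p set set \<Rightarrow> 'd" where
  "sem \<equiv> wsem pl vl tm z e"

lemma bigplus_eq_F: "bigplus pl z = F"
  unfolding bigplus_def by (simp add: fun_eq_iff)

lemma wsem_foldl_WOplus:
  "sem P (foldl WOplus \<zeta> \<zeta>s) \<gamma> = pl (sem P \<zeta> \<gamma>) (F (\<lambda>\<xi>. sem P \<xi> \<gamma>) (set \<zeta>s))"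
  by (induction \<zeta>s arbitrary: \<zeta>) (simp_all add: insert_idem assoc)

lemma wsem_oplus_list:
  "\<zeta>s \<noteq> [] \<Longrightarrow> sem P (oplus_list \<zeta>s) \<gamma> = F (\<lambda>\<xi>. sem P \<xi> \<gamma>) (set \<zeta>s)"
  unfolding oplus_list_def by (cases \<zeta>s) (simp_all add: wsem_foldl_WOplus insert_idem)

lemma wsem_uplus_list_WPcl:
  assumes "finite P" "fs \<noteq> []" "\<gamma> \<in> CP P"
  shows "sem P (uplus_list (map WPcl fs)) \<gamma> =
           (if \<exists>gs\<in>disj_seqs P \<gamma>. list_all2 (pcl_sat P) gs fs then e else z)"
  using assms(2,3)
proof (induction fs arbitrary: \<gamma> rule: rev_induct)
  case (snoc f fs)
  show ?case
  proof (cases "fs = []")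
    case True
    have "[g] \<in> disj_seqs P \<gamma> \<longleftrightarrow> g = \<gamma>" for g
      using snoc.prems unfolding disj_seqs_iff by auto
    then show ?thesis
      using True by (auto simp: uplus_list_def list_all2_Cons2)
  next
    case False
    define splits where
      "splits = {(\<gamma>1, \<gamma>2). \<gamma>1 \<in> CP P \<and> \<gamma>2 \<in> CP P \<and> \<gamma>1 \<inter> \<gamma>2 = {} \<and> \<gamma>1 \<union> \<gamma>2 = \<gamma>}"
    have "finite splits"
      by (rule finite_subset[of _ "CP P \<times> CP P"]) (auto simp: splits_def finite_CP assms(1))
    have uplus_snoc:
      "uplus_list (map WPcl (fs @ [f])) = WUplus (uplus_list (map WPcl fs)) (WPcl f)"
      using False by (cases fs) (simp_all add: uplus_list_def)
    let ?factors =
      "\<lambda>p. (\<exists>gs\<in>disj_seqs P (fst p). list_all2 (pcl_sat P) gs fs) \<and> pcl_sat P (snd p) f"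
    have "sem P (uplus_list (map WPcl (fs @ [f]))) \<gamma> =
          F (\<lambda>p. if ?factors p then e else z) splits"
      unfolding uplus_snoc using snoc.IH[OF False]
      by (auto simp: bigplus_eq_F splits_def intro!: cong)
    also have "\<dots> = (if \<exists>p\<in>splits. ?factors p then e else z)"
      using \<open>finite splits\<close> by (rule if_const)
    also have "(\<exists>p\<in>splits. ?factors p) \<longleftrightarrow>
               (\<exists>gs\<in>disj_seqs P \<gamma>. list_all2 (pcl_sat P) gs (fs @ [f]))"
    proof
      assume "\<exists>p\<in>splits. ?factors p"
      then obtain \<gamma>1 \<gamma>2 gs1 where "gs1 \<in> disj_seqs P \<gamma>1" "list_all2 (pcl_sat P) gs1 fs"
        and "\<gamma>2 \<in> CP P" "\<gamma>1 \<inter> \<gamma>2 = {}" "\<gamma>1 \<union> \<gamma>2 = \<gamma>" "pcl_sat P \<gamma>2 f"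
        unfolding splits_def by auto
      moreover from this have "gs1 \<noteq> []"
        using False by auto
      ultimately show "\<exists>gs\<in>disj_seqs P \<gamma>. list_all2 (pcl_sat P) gs (fs @ [f])"
        by (metis disj_seqs_snoc list_all2_snoc2)
    next
      assume "\<exists>gs\<in>disj_seqs P \<gamma>. list_all2 (pcl_sat P) gs (fs @ [f])"
      then obtain gs1 g where "gs1 @ [g] \<in> disj_seqs P \<gamma>" "list_all2 (pcl_sat P) gs1 fs"
        and "pcl_sat P g f"
        by (auto simp: list_all2_snoc2)
      moreover from this have "gs1 \<noteq> []"
        using False by auto
      ultimately obtain \<gamma>1 where
        "gs1 \<in> disj_seqs P \<gamma>1" "g \<in> CP P" "\<gamma>1 \<inter> g = {}" "\<gamma>1 \<union> g = \<gamma>"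
        using disj_seqs_snoc by blast
      then have "(\<gamma>1, g) \<in> splits"
        unfolding splits_def using disj_seqs_CP by blast
      then show "\<exists>p\<in>splits. ?factors p"
        using \<open>gs1 \<in> disj_seqs P \<gamma>1\<close> \<open>list_all2 (pcl_sat P) gs1 fs\<close> \<open>pcl_sat P g f\<close>
        by force
    qed
    finally show ?thesis .
  qed
qed simp

end

locale full_normal_form_star = idempotent_pv_monoid pl vl tm z e
  for pl :: "'d \<Rightarrow> 'd \<Rightarrow> 'd" and vl tm z e +
  fixes P :: "'p set" and n :: nat and d :: "nat \<Rightarrow> 'd"
    and J :: "nat \<Rightarrow> nat set" and m :: "nat \<Rightarrow> nat \<Rightarrow> 'p pil"
  assumes symmetric: "symmetric_val vl"
    and finite_P: "finite P"
    and fnf: "full_normal_form P n J m"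
begin

abbreviation summand :: "nat \<Rightarrow> 'p pcl" where
  "summand i \<equiv> mono_sum (J i) (m i)"

abbreviation \<zeta> :: "('d, 'p) wpcl" where
  "\<zeta> \<equiv> fnf_formula n d J m"

definition is_model :: "nat \<Rightarrow> 'p set set \<Rightarrow> bool" where
  "is_model i \<gamma> \<longleftrightarrow> \<gamma> \<in> CP P \<and> pcl_sat P \<gamma> (summand i)"

(* THE yields a junk value when summand i has no model, so model_decomposition has to
   require is_model i (model i) explicitly. *)
definition model :: "nat \<Rightarrow> 'p set set" where
  "model i = (THE \<gamma>. is_model i \<gamma>)"

definition model_decomposition :: "nat set \<Rightarrow> 'p set set \<Rightarrow> bool" where
  "model_decomposition S \<gamma> \<longleftrightarrow>
     (\<forall>i\<in>S. is_model i (model i)) \<and> pairwise (\<lambda>i j. disjnt (model i) (model j)) S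
     \<and> (\<Union>i\<in>S. model i) = \<gamma>"

definition val_of :: "nat set \<Rightarrow> 'd" where
  "val_of S = vl (map d (sorted_list_of_set S))"

lemma n_pos: "n \<ge> 1"
  using fnf unfolding full_normal_form_def by blast

lemma model_unique:
  assumes "i \<in> {1..n}" "is_model i \<gamma>" "is_model i \<gamma>'"
  shows "\<gamma> = \<gamma>'"
proof -
  have "at_most_one_model P (summand i)"
    using full_normal_form_summands[OF fnf assms(1)] by (rule at_most_one_model_mono_sum)
  then show ?thesis
    using assms(2,3) unfolding at_most_one_model_def is_model_def by blast
qed

lemma model_eq:
  assumes "i \<in> {1..n}" "is_model i \<gamma>"
  shows "model i = \<gamma>"
  unfolding model_def using assms(2)
proof (rule the_equality)
  show "\<gamma>' = \<gamma>" if "is_model i \<gamma>'" for \<gamma>'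
    using model_unique[OF assms(1) that assms(2)] .
qed

lemma summand_index_unique:
  assumes "i \<in> {1..n}" "i' \<in> {1..n}" "is_model i \<gamma>" "is_model i' \<gamma>"
  shows "i = i'"
proof (rule ccontr)
  assume "i \<noteq> i'"
  then have "\<not> pcl_equiv P (summand i) (summand i')"
    by (rule full_normal_form_distinct_summands[OF fnf assms(1,2)])
  then obtain \<gamma>' where "\<gamma>' \<in> CP P" "pcl_sat P \<gamma>' (summand i) \<noteq> pcl_sat P \<gamma>' (summand i')"
    unfolding pcl_equiv_def by blast
  then show False
    using model_unique[of i \<gamma> \<gamma>'] model_unique[of i' \<gamma> \<gamma>'] assms unfolding is_model_def by blast
qed

lemma wsem_zeta:
  "sem P \<zeta> \<gamma> = F (\<lambda>i. if pcl_sat P \<gamma> (summand i) then d i else z) {1..n}"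
proof -
  have "set (map (\<lambda>i. WOtimes (WConst (d i)) (WPcl (summand i))) [1..<Suc n]) =
        (\<lambda>i. WOtimes (WConst (d i)) (WPcl (summand i))) ` {1..n}"
    by auto
  then show ?thesis
    using n_pos unfolding fnf_formula_def
    by (simp add: wsem_oplus_list image_idem o_def if_distrib cong: if_cong)
qed

lemma wsem_zeta_model:
  assumes "i \<in> {1..n}" "is_model i \<gamma>"
  shows "sem P \<zeta> \<gamma> = d i"
proof -
  have "F (\<lambda>i'. if pcl_sat P \<gamma> (summand i') then d i' else z) {1..n} =
        F (\<lambda>i'. if i' = i then d i' else z) {1..n}"
  proof (rule cong)
    fix i' assume "i' \<in> {1..n}"
    then have "pcl_sat P \<gamma> (summand i') \<longleftrightarrow> i' = i"
      using summand_index_unique[of i' i \<gamma>] assms unfolding is_model_def by blast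
    then show "(if pcl_sat P \<gamma> (summand i') then d i' else z) = (if i' = i then d i' else z)"
      by simp
  qed simp
  then show ?thesis
    using assms(1) by (simp add: wsem_zeta)
qed

lemma wsem_zeta_no_model:
  "\<gamma> \<in> CP P \<Longrightarrow> \<forall>i\<in>{1..n}. \<not> is_model i \<gamma> \<Longrightarrow> sem P \<zeta> \<gamma> = z"
  unfolding wsem_zeta is_model_def by (intro neutral) auto

lemma map_wsem_zeta:
  "list_all2 (\<lambda>g i. is_model i g) gs I \<Longrightarrow> set I \<subseteq> {1..n} \<Longrightarrow>
   map (sem P \<zeta>) gs = map d I"
  by (induction rule: list_all2_induct) (simp_all add: wsem_zeta_model)

lemma model_decomposition_of_disj_seq:
  assumes gs: "gs \<in> disj_seqs P \<gamma>" and models: "list_all2 (\<lambda>g i. is_model i g) gs I"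
    and I: "set I \<subseteq> {1..n}"
  shows "distinct I \<and> model_decomposition (set I) \<gamma>"
proof -
  have "map model I = gs"
    using models I by (induction rule: list_all2_induct) (simp_all add: model_eq)
  moreover have "distinct gs" "pairwise disjnt (set gs)" "\<Union> (set gs) = \<gamma>"
    using gs unfolding disj_seqs_iff by auto
  moreover have "\<forall>i\<in>set I. is_model i (model i)"
    using models I by (induction rule: list_all2_induct) (simp_all add: model_eq)
  ultimately show ?thesis
    unfolding model_decomposition_def
    by (auto simp: distinct_map pairwise_def inj_on_eq_iff)
qed

lemma disj_seq_of_model_decomposition:
  assumes "model_decomposition (set I) \<gamma>" "distinct I" "I \<noteq> []"
  shows "map model I \<in> disj_seqs P \<gamma> \<and> list_all2 (\<lambda>g i. is_model i g) (map model I) I"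
proof -
  have models: "\<forall>i\<in>set I. is_model i (model i)"
    and disjoint: "pairwise (\<lambda>i j. disjnt (model i) (model j)) (set I)"
    and union: "(\<Union>i\<in>set I. model i) = \<gamma>"
    using assms(1) unfolding model_decomposition_def by auto
  have "model i \<noteq> {}" if "i \<in> set I" for i
    using models that unfolding is_model_def CP_def by auto
  then have "inj_on model (set I)"
    using disjoint unfolding inj_on_def pairwise_def disjnt_def by fastforce
  then show ?thesis
    using assms(2,3) models disjoint union
    unfolding disj_seqs_iff is_model_def
    by (auto simp: distinct_map list_all2_map1 list_all2_same pairwise_image pairwise_def)
qed

lemma model_decomposition_iff_disj_seq:
  assumes "I \<noteq> []" "distinct I" "set I \<subseteq> {1..n}"
  shows "model_decomposition (set I) \<gamma> \<longleftrightarrow>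
         (\<exists>gs\<in>disj_seqs P \<gamma>. list_all2 (\<lambda>g i. is_model i g) gs I)"
  using assms model_decomposition_of_disj_seq disj_seq_of_model_decomposition by blast

lemma wsem_uplus_summands:
  assumes "I \<noteq> []" "distinct I" "set I \<subseteq> {1..n}" "\<gamma> \<in> CP P"
  shows "sem P (uplus_list (map (\<lambda>i. WPcl (summand i)) I)) \<gamma> =
         (if model_decomposition (set I) \<gamma> then e else z)"
proof -
  have "list_all2 (pcl_sat P) gs (map summand I) \<longleftrightarrow> list_all2 (\<lambda>g i. is_model i g) gs I"
    if "gs \<in> disj_seqs P \<gamma>" for gs
    using that unfolding disj_seqs_iff is_model_def list_all2_map2
    by (auto simp: list_all2_conv_all_nth subset_iff)
  then show ?thesis
    using wsem_uplus_list_WPcl[OF finite_P, of "map summand I" \<gamma>] assms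
          model_decomposition_iff_disj_seq[OF assms(1-3)]
    by (simp add: o_def)
qed

lemma model_decomposition_maximal:
  assumes "model_decomposition T \<gamma>" "model_decomposition S \<gamma>" "S \<subseteq> T"
  shows "S = T"
proof (rule ccontr)
  assume "S \<noteq> T"
  then obtain i where i: "i \<in> T" "i \<notin> S"
    using assms(3) by blast
  then have "model i \<noteq> {}"
    using assms(1) unfolding model_decomposition_def is_model_def CP_def by auto
  then obtain \<alpha> where "\<alpha> \<in> model i"
    by blast
  moreover have "model i \<subseteq> \<gamma>"
    using assms(1) i unfolding model_decomposition_def by auto
  ultimately obtain j where j: "j \<in> S" "\<alpha> \<in> model j"
    using assms(2) unfolding model_decomposition_def by auto
  have "pairwise (\<lambda>i j. disjnt (model i) (model j)) T"
    using assms(1) unfolding model_decomposition_def by blast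
  moreover have "j \<in> T" "i \<noteq> j"
    using assms(3) i j(1) by auto
  ultimately have "disjnt (model i) (model j)"
    using i(1) by (metis (no_types, lifting) pairwiseD)
  then show False
    using \<open>\<alpha> \<in> model i\<close> j(2) unfolding disjnt_def by blast
qed

lemma val_of_set:
  assumes "I \<noteq> []" "distinct I"
  shows "vl (map d I) = val_of (set I)"
proof -
  have "mset (sorted_list_of_set (set I)) = mset I"
    using assms(2) by (simp add: sorted_list_of_set_sort_remdups distinct_remdups_id)
  then show ?thesis
    using symmetric assms(1) unfolding symmetric_val_def val_of_def
    by (metis Nil_is_map_conv mset_map)
qed

lemma nonzero_star_term:
  assumes gs: "gs \<in> disj_seqs P \<gamma>" and nonzero: "vl (map (sem P \<zeta>) gs) \<noteq> z"
  obtains I where "I \<noteq> []" "distinct I" "set I \<subseteq> {1..n}" "model_decomposition (set I) \<gamma>"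
    and "map (sem P \<zeta>) gs = map d I"
proof -
  have "\<exists>i\<in>{1..n}. is_model i g" if "g \<in> set gs" for g
  proof (rule ccontr)
    assume "\<not> (\<exists>i\<in>{1..n}. is_model i g)"
    then have "sem P \<zeta> g = z"
      using gs that wsem_zeta_no_model unfolding disj_seqs_iff by blast
    then have "z \<in> set (map (sem P \<zeta>) gs)"
      using that by (metis image_eqI set_map)
    then show False
      using nonzero vl_zero by blast
  qed
  then obtain idx where idx: "\<forall>g\<in>set gs. idx g \<in> {1..n} \<and> is_model (idx g) g"
    by metis
  then have models: "list_all2 (\<lambda>g i. is_model i g) gs (map idx gs)"
    by (simp add: list_all2_map2 list_all2_same)
  show thesis
  proof
    show "map idx gs \<noteq> []"
      using gs unfolding disj_seqs_iff by simp
    show "set (map idx gs) \<subseteq> {1..n}"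
      using idx by auto
    then show "distinct (map idx gs)" "model_decomposition (set (map idx gs)) \<gamma>"
      using model_decomposition_of_disj_seq[OF gs models] by auto
    show "map (sem P \<zeta>) gs = map d (map idx gs)"
      using map_wsem_zeta[OF models] \<open>set (map idx gs) \<subseteq> {1..n}\<close> .
  qed
qed

lemma wsem_star_zeta:
  "sem P (WStar \<zeta>) \<gamma> =
     F (\<lambda>S. if model_decomposition S \<gamma> then val_of S else z) (Pow {1..n} - {{}})"
proof -
  let ?term = "\<lambda>gs. vl (map (sem P \<zeta>) gs)"
  let ?summand = "\<lambda>S. if model_decomposition S \<gamma> then val_of S else z"
  have term_in: "?term gs \<in> ?summand ` (Pow {1..n} - {{}})"
    if gs: "gs \<in> disj_seqs P \<gamma>" and nonzero: "?term gs \<noteq> z" for gs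
  proof -
    obtain I where I: "I \<noteq> []" "distinct I" "set I \<subseteq> {1..n}"
        "model_decomposition (set I) \<gamma>" "map (sem P \<zeta>) gs = map d I"
      using nonzero_star_term[OF gs nonzero] by blast
    then have "?term gs = ?summand (set I)"
      by (simp add: val_of_set)
    then show ?thesis
      using I by blast
  qed
  have summand_in: "?summand S \<in> ?term ` disj_seqs P \<gamma>"
    if S: "S \<in> Pow {1..n} - {{}}" and nonzero: "?summand S \<noteq> z" for S
  proof -
    have decomposition: "model_decomposition S \<gamma>"
      using nonzero by argo
    define I where "I = sorted_list_of_set S"
    have I: "I \<noteq> []" "distinct I" "set I = S"
      using S finite_subset[of S "{1..n}"] unfolding I_def by auto
    then have disj: "map model I \<in> disj_seqs P \<gamma>"
      and models: "list_all2 (\<lambda>g i. is_model i g) (map model I) I"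
      using disj_seq_of_model_decomposition[of I \<gamma>] decomposition by auto
    have "map (sem P \<zeta>) (map model I) = map d I"
      using models I S by (intro map_wsem_zeta) auto
    then have "?term (map model I) = vl (map d I)"
      by (rule arg_cong)
    also have "\<dots> = ?summand S"
      using decomposition by (simp add: val_of_def I_def)
    finally show ?thesis
      using disj by (metis image_eqI)
  qed
  have "?term ` disj_seqs P \<gamma> - {z} = ?summand ` (Pow {1..n} - {{}}) - {z}"
  proof (intro equalityI subsetI)
    fix v assume "v \<in> ?term ` disj_seqs P \<gamma> - {z}"
    then obtain gs where "gs \<in> disj_seqs P \<gamma>" "v = ?term gs" "v \<noteq> z"
      by blast
    then show "v \<in> ?summand ` (Pow {1..n} - {{}}) - {z}"
      using term_in[of gs] by blast
  next
    fix v assume "v \<in> ?summand ` (Pow {1..n} - {{}}) - {z}"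
    then obtain S where "S \<in> Pow {1..n} - {{}}" "v = ?summand S" "v \<noteq> z"
      by blast
    then show "v \<in> ?term ` disj_seqs P \<gamma> - {z}"
      using summand_in[of S] by blast
  qed
  then show ?thesis
    by (simp add: bigplus_eq_F cong_nonzero_values finite_disj_seqs[OF finite_P] del: Pow_iff)
qed

lemma wsem_oplus_over_subsets:
  assumes "\<gamma> \<in> CP P"
  shows "sem P (oplus_list
           (map (\<lambda>I. WOtimes (WConst (vl (map d I))) (uplus_list (map (\<lambda>i. WPcl (summand i)) I)))
             (filter (\<lambda>I. I \<noteq> []) (subseqs [1..<Suc n])))) \<gamma> =
     F (\<lambda>S. if model_decomposition S \<gamma> then val_of S else z) (Pow {1..n} - {{}})"
proof -
  let ?subsets = "filter (\<lambda>I. I \<noteq> []) (subseqs [1..<Suc n])"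
  let ?term = "\<lambda>I. WOtimes (WConst (vl (map d I))) (uplus_list (map (\<lambda>i. WPcl (summand i)) I))"
  let ?summand = "\<lambda>S. if model_decomposition S \<gamma> then val_of S else z"
  have "[1..<Suc n] \<noteq> []"
    using n_pos by simp
  then have "[1..<Suc n] \<in> set ?subsets"
    by (simp only: set_filter mem_Collect_eq subseqs_refl simp_thms)
  then have "set ?subsets \<noteq> {}"
    using equals0D by metis
  then have nonempty: "map ?term ?subsets \<noteq> []"
    by (simp only: set_empty map_is_Nil_conv simp_thms)
  have "sem P (oplus_list (map ?term ?subsets)) \<gamma> =
        F (\<lambda>\<xi>. sem P \<xi> \<gamma>) (?term ` set ?subsets)"
    by (simp only: wsem_oplus_list[OF nonempty] set_map)
  also have "\<dots> = F (\<lambda>I. sem P (?term I) \<gamma>) (set ?subsets)"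
    by (simp only: image_idem[OF finite_set] comp_def)
  also have "\<dots> = F (\<lambda>I. ?summand (set I)) (set ?subsets)"
  proof (rule cong)
    fix I assume I: "I \<in> set ?subsets"
    then have subseq: "I \<in> set (subseqs [1..<Suc n])" and "I \<noteq> []"
      by (simp_all only: set_filter mem_Collect_eq simp_thms)
    moreover have "distinct I"
      using subseq distinct_upt by (rule subseqs_distinctD)
    moreover have "set I \<subseteq> {1..n}"
      using imageI[OF subseq, of set] unfolding subseqs_powset set_upt_Suc by blast
    ultimately show "sem P (?term I) \<gamma> = ?summand (set I)"
      using assms by (simp add: wsem_uplus_summands val_of_set)
  qed (rule refl)
  also have "\<dots> = F ?summand (set ` set ?subsets)"
    by (simp only: image_idem[OF finite_set] comp_def)
  also have "set ` set ?subsets = Pow {1..n} - {{}}"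
    by (simp only: set_image_nonempty_subseqs set_upt_Suc)
  finally show ?thesis .
qed

lemma wsem_star_zeta_full:
  assumes "model_decomposition {1..n} \<gamma>"
  shows "sem P (WStar \<zeta>) \<gamma> = vl (map d [1..<Suc n])"
proof -
  have "sem P (WStar \<zeta>) \<gamma> =
        F (\<lambda>S. if model_decomposition S \<gamma> then val_of S else z) (Pow {1..n} - {{}})"
    by (rule wsem_star_zeta)
  also have "\<dots> = F (\<lambda>S. if S = {1..n} then val_of S else z) (Pow {1..n} - {{}})"
    using assms model_decomposition_maximal[OF assms] by (intro cong) auto
  also have "\<dots> = val_of {1..n}"
    using n_pos by simp
  also have "\<dots> = vl (map d [1..<Suc n])"
    unfolding val_of_def atLeastLessThanSuc_atLeastAtMost[symmetric] sorted_list_of_set_range ..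
  finally show ?thesis .
qed

lemma star_expansion:
  "wequiv pl vl tm z e P (WStar \<zeta>)
     (oplus_list
       (map (\<lambda>I. WOtimes (WConst (vl (map d I))) (uplus_list (map (\<lambda>i. WPcl (summand i)) I)))
         (filter (\<lambda>I. I \<noteq> []) (subseqs [1..<Suc n]))))"
  unfolding wequiv_def by (intro ballI) (simp only: wsem_star_zeta wsem_oplus_over_subsets)

lemma star_times_full_product:
  "wequiv pl vl tm z e P
     (WOtimes (WStar \<zeta>) (uplus_list (map (\<lambda>i. WPcl (summand i)) [1..<Suc n])))
     (WOtimes (WConst (vl (map d [1..<Suc n])))
        (uplus_list (map (\<lambda>i. WPcl (summand i)) [1..<Suc n])))"
  unfolding wequiv_def
proof (intro ballI)
  let ?U = "uplus_list (map (\<lambda>i. WPcl (summand i)) [1..<Suc n])"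
  fix \<gamma> assume \<gamma>: "\<gamma> \<in> CP P"
  have nonempty: "[1..<Suc n] \<noteq> []"
    using n_pos by simp
  have indices: "set [1..<Suc n] \<subseteq> {1..n}"
    by (simp only: set_upt_Suc order_refl)
  have full_product: "sem P ?U \<gamma> = (if model_decomposition {1..n} \<gamma> then e else z)"
    using wsem_uplus_summands[OF nonempty distinct_upt indices \<gamma>] unfolding set_upt_Suc .
  show "sem P (WOtimes (WStar \<zeta>) ?U) \<gamma> =
        sem P (WOtimes (WConst (vl (map d [1..<Suc n]))) ?U) \<gamma>"
  proof (cases "model_decomposition {1..n} \<gamma>")
    case True
    then show ?thesis
      by (simp only: wsem.simps(1,4) full_product wsem_star_zeta_full if_True)
  next
    case False
    then show ?thesis
      by (simp only: wsem.simps(4) full_product if_False tm_zero_right)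
  qed
qed

end

theorem mainTheorem15:
  fixes pl tm :: "'d \<Rightarrow> 'd \<Rightarrow> 'd" and vl :: "'d list \<Rightarrow> 'd" and z e :: 'd
    and P :: "'p set" and n :: nat and d :: "nat \<Rightarrow> 'd"
    and J :: "nat \<Rightarrow> nat set" and m :: "nat \<Rightarrow> nat \<Rightarrow> 'p pil"
  assumes "pv_monoid pl vl tm z e"
    and "idempotent_pv pl"
    and "symmetric_val vl"
    and "finite P" and "P \<noteq> {}"
    and "full_normal_form P n J m"
  shows "wequiv pl vl tm z e P (WStar (fnf_formula n d J m))
           (oplus_list (map (\<lambda>I'. WOtimes (WConst (vl (map d I')))
                                   (uplus_list (map (\<lambda>i. WPcl (mono_sum (J i) (m i))) I')))
              (filter (\<lambda>I'. I' \<noteq> []) (subseqs [1..<Suc n]))))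
       \<and> wequiv pl vl tm z e P
           (WOtimes (WStar (fnf_formula n d J m))
                    (uplus_list (map (\<lambda>i. WPcl (mono_sum (J i) (m i))) [1..<Suc n])))
           (WOtimes (WConst (vl (map d [1..<Suc n])))
                    (uplus_list (map (\<lambda>i. WPcl (mono_sum (J i) (m i))) [1..<Suc n])))"
proof -
  interpret full_normal_form_star pl vl tm z e P n d J m
    using assms by unfold_locales (simp_all add: pv_monoid_def)
  show ?thesis
    using star_expansion star_times_full_product ..
qed

end
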